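(* Let $\alpha,\beta,\gamma,\delta$ be non-negative integers with $\alpha<\gamma$ and $\delta<\beta$, and let $a,a',b,b',c,c',d,d'$ be non-negative integers with $a,a'\le\alpha$, $b,b'\le\beta$, $c,c'\le\gamma$, $d,d'\le\delta$. Consider the mixed polynomial $$ g(z_1,z_2,\bar z_1,\bar z_2)= z_1^{a}\bar z_1^{\alpha-a}z_2^{b}\bar z_2^{\beta-b}- z_1^{a'}\bar z_1^{\alpha-a'}z_2^{b'}\bar z_2^{\beta-b'}+ z_1^{c}\bar z_1^{\gamma-c}z_2^{d}\bar z_2^{\delta-d}+ z_1^{c'}\bar z_1^{\gamma-c'}z_2^{d'}\bar z_2^{\delta-d'} . $$ Let $P={}^t(p_1,p_2)$ be a strictly positive integer weight vector and $Q={}^t(q_1,q_2)\neq \mathbf 0$ a weight vector with $q_1,q_2\ge 0$. Assume: (1) $p_1(\gamma-\alpha)+p_2(\delta-\beta)=0$; (2) $a-a'=q_2k$ and $b-b'=-q_1k$ for some non-zero integer $k$; (3) $(a-a',\,b-b')=(c-c',\,d-d')$; (4) $(2(a-c)-\alpha+\gamma,\ 2(b-d)-\beta+\delta)=\pm(a-a',\,b-b')$; (5) $q_1(2a-\alpha)+q_2(2b-\beta)\neq 0$. Then $g$ is a mixed weighted homogeneous polynomial, radially weighted homogeneous with respect to $P$ of radial degree $d_r=p_1\alpha+p_2\beta=p_1\gamma+p_2\delta>0$ and polar weighted homogeneous with respect to $Q$ of polar degree $d_p=q_1(2a-\alpha)+q_2(2b-\beta)\neq 0$. Moreover, for the Newton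 polyhedron $\Gamma_+(g)$ of the germ $(g,\mathbf 0)$ one has $\dim\Delta(P)=1$ and $g=g_{\Delta(P)}$, and $$ g^{-1}(0)\cap(\mathbb C^* )^2=\emptyset .$$ Consequently $(g,\mathbf 0)$ is Newton non-degenerate over $\Delta(P)$ but not strongly Newton non-degenerate over $\Delta(P)$.
   Context: A mixed polynomial is a finite sum $f(\mathbf z,\bar{\mathbf z})=\sum_{\nu,\mu}c_{\nu,\mu}\mathbf z^\nu\bar{\mathbf z}^\mu$ with $\nu,\mu\in\mathbb Z_+^n$, $\mathbf z^\nu=z_1^{\nu_1}\cdots z_n^{\nu_n}$, $\bar{\mathbf z}^\mu=\bar z_1^{\mu_1}\cdots\bar z_n^{\mu_n}$ (coefficients are unique); assume $f(\mathbf 0)=0$. A point $\mathbf a$ is a mixed critical point of $f$ if the real differential $df_{\mathbf a}:T_{\mathbf a}\mathbb C^n\to T_{f(\mathbf a)}\mathbb C\cong\mathbb R^2$ has rank $<2$. $f$ is radially weighted homogeneous with respect to $P={}^t(p_1,\dots,p_n)\in\mathbb Z_+^n\setminus\{0\}$ of radial degree $d_r>0$ if $c_{\nu,\mu}\ne0\Rightarrow\sum_i p_i(\nu_i+\mu_i)=d_r$; $f$ is polar weighted homogeneous with respect to $Q={}^t(q_1,\dots,q_n)\ne0$ of polar degree $d_p$ if $c_{\nu,\mu}\ne0\Rightarrow\sum_i q_i(\nu_i-\mu_i)=d_p$. A mixed weighted homogeneous polynomial is one that is both radially and polar weighted homogeneous (possibly with different weight vectors). The (radial) Newton polyhedron $\Gamma_+(f)$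 is the convex hull of $\bigcup_{c_{\nu,\mu}\neq0}\big((\nu+\mu)+\mathbb R_+^n\big)$. For $P\in\mathbb Z_+^n\setminus\{0\}$, $d(P)=\min_{\xi\in\Gamma_+(f)}\sum_j p_j\xi_j$ and the face $\Delta(P)=\{\xi\in\Gamma_+(f):\sum_jp_j\xi_j=d(P)\}$; $P$ is strictly positive if all $p_i>0$. For a compact face $\Delta$, the face function is $f_\Delta=\sum_{\nu+\mu\in\Delta}c_{\nu,\mu}\mathbf z^\nu\bar{\mathbf z}^\mu$. $(f,\mathbf 0)$ is Newton non-degenerate over a compact face $\Delta$ if $0$ is not a mixed critical value of $f_\Delta:(\mathbb C^* )^n\to\mathbb C$ (in particular this holds if $f_\Delta^{-1}(0)\cap(\mathbb C^* )^n=\emptyset$). For a compact face $\Delta$ with $\dim\Delta\ge1$, $(f,\mathbf 0)$ is strongly Newton non-degenerate over $\Delta$ if $f_\Delta:(\mathbb C^* )^n\to\mathbb C$ has no mixed critical points and is surjective onto $\mathbb C$. *)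

theory Defs
  imports "HOL-Analysis.Analysis"
begin

text \<open>Mixed polynomials in two complex variables z1, z2, given by their (unique) coefficient
  function.  An exponent is a pair ((nu1,nu2),(mu1,mu2)) standing for the monomial
  z1^nu1 z2^nu2 conj(z1)^mu1 conj(z2)^mu2.\<close>

type_synonym mexp = "(nat \<times> nat) \<times> (nat \<times> nat)"
type_synonym mpoly2 = "mexp \<Rightarrow> complex"

definition msupp :: "mpoly2 \<Rightarrow> mexp set" where
  "msupp f = {e. f e \<noteq> 0}"

definition is_mpoly2 :: "mpoly2 \<Rightarrow> bool" where
  "is_mpoly2 f \<longleftrightarrow> finite (msupp f)"

definition mmono :: "mexp \<Rightarrow> complex \<Rightarrow> mpoly2" where
  "mmono e c = (\<lambda>e'. if e' = e then c else 0)"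

definition madd :: "mpoly2 \<Rightarrow> mpoly2 \<Rightarrow> mpoly2" where
  "madd f h = (\<lambda>e. f e + h e)"

definition meval :: "mpoly2 \<Rightarrow> complex \<times> complex \<Rightarrow> complex" where
  "meval f z = (\<Sum>e\<in>msupp f. f e * fst z ^ fst (fst e) * snd z ^ snd (fst e)
                 * cnj (fst z) ^ fst (snd e) * cnj (snd z) ^ snd (snd e))"

definition mixed_critical_point :: "(complex \<times> complex \<Rightarrow> complex) \<Rightarrow> complex \<times> complex \<Rightarrow> bool" where
  "mixed_critical_point F a \<longleftrightarrow>
     (\<exists>F'. (F has_derivative F') (at a) \<and> dim (range F') < 2)"

definition torus2 :: "(complex \<times> complex) set" where
  "torus2 = {z. fst z \<noteq> 0 \<and> snd z \<noteq> 0}"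

definition radially_wh :: "mpoly2 \<Rightarrow> nat \<times> nat \<Rightarrow> nat \<Rightarrow> bool" where
  "radially_wh f P dr \<longleftrightarrow> dr > 0 \<and> (P \<noteq> (0,0)) \<and>
     (\<forall>e. f e \<noteq> 0 \<longrightarrow>
        fst P * (fst (fst e) + fst (snd e)) + snd P * (snd (fst e) + snd (snd e)) = dr)"

definition polar_wh :: "mpoly2 \<Rightarrow> int \<times> int \<Rightarrow> int \<Rightarrow> bool" where
  "polar_wh f Q dp \<longleftrightarrow> Q \<noteq> (0,0) \<and>
     (\<forall>e. f e \<noteq> 0 \<longrightarrow>
        fst Q * (int (fst (fst e)) - int (fst (snd e)))
          + snd Q * (int (snd (fst e)) - int (snd (snd e))) = dp)"

definition mixed_wh :: "mpoly2 \<Rightarrow> bool" where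
  "mixed_wh f \<longleftrightarrow> (\<exists>P dr. radially_wh f P dr) \<and> (\<exists>Q dp. polar_wh f Q dp)"

definition rexp :: "mexp \<Rightarrow> real \<times> real" where
  "rexp e = (real (fst (fst e) + fst (snd e)), real (snd (fst e) + snd (snd e)))"

definition newton_polyhedron :: "mpoly2 \<Rightarrow> (real \<times> real) set" where
  "newton_polyhedron f =
     convex hull (\<Union>e\<in>msupp f. {rexp e + v | v. fst v \<ge> 0 \<and> snd v \<ge> 0})"

definition wfun :: "nat \<times> nat \<Rightarrow> real \<times> real \<Rightarrow> real" where
  "wfun P \<xi> = real (fst P) * fst \<xi> + real (snd P) * snd \<xi>"

definition dP :: "mpoly2 \<Rightarrow> nat \<times> nat \<Rightarrow> real" where
  "dP f P = Inf (wfun P ` newton_polyhedron f)"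

definition faceP :: "mpoly2 \<Rightarrow> nat \<times> nat \<Rightarrow> (real \<times> real) set" where
  "faceP f P = {\<xi> \<in> newton_polyhedron f. wfun P \<xi> = dP f P}"

definition face_function :: "mpoly2 \<Rightarrow> (real \<times> real) set \<Rightarrow> mpoly2" where
  "face_function f \<Delta> = (\<lambda>e. if rexp e \<in> \<Delta> then f e else 0)"

definition newton_nondeg_over :: "mpoly2 \<Rightarrow> (real \<times> real) set \<Rightarrow> bool" where
  "newton_nondeg_over f \<Delta> \<longleftrightarrow>
     \<not> (\<exists>z\<in>torus2. mixed_critical_point (meval (face_function f \<Delta>)) z
                   \<and> meval (face_function f \<Delta>) z = 0)"

definition strongly_newton_nondeg_over :: "mpoly2 \<Rightarrow> (real \<times> real) set \<Rightarrow> bool" where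
  "strongly_newton_nondeg_over f \<Delta> \<longleftrightarrow> aff_dim \<Delta> \<ge> 1 \<and>
     (\<forall>z\<in>torus2. \<not> mixed_critical_point (meval (face_function f \<Delta>)) z) \<and>
     meval (face_function f \<Delta>) ` torus2 = UNIV"

end

theory Submission
  imports Defs
begin

text \<open>On the torus write \<open>z\<^sub>j = r\<^sub>j w\<^sub>j\<close> with \<open>|w\<^sub>j| = 1\<close>. A mixed monomial then becomes a radial
  factor, depending only on its radial exponent \<open>\<nu> + \<mu>\<close>, times the Laurent monomial in \<open>w\<close> of its
  polar exponent \<open>\<nu> - \<mu>\<close>. The first two monomials of \<open>g\<close> share the radial factor \<open>R\<^sub>1\<close>, the
  last two share \<open>R\<^sub>2\<close>, and the hypotheses make their polar exponents \<open>B + 2\<kappa>, B\<close> and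
  \<open>B \<plusminus> \<kappa>\<close> (or \<open>B + 3\<kappa>, B + \<kappa>\<close>), where \<open>\<kappa> = (a - a', b - b')\<close>. With the unimodular
  \<open>U = w\<^sup>B\<close>, \<open>X = w\<^sup>\<kappa>\<close> this gives \<open>g = U (R\<^sub>1 (X\<^sup>2 - 1) + R\<^sub>2 (X + X\<^sup>-\<^sup>1))\<close> (or
  \<open>g = U X (R\<^sub>1 (X - X\<^sup>-\<^sup>1) + R\<^sub>2 (X\<^sup>2 + 1))\<close>), and comparing real and imaginary parts shows
  that this never vanishes. Since \<open>\<kappa>\<close> is orthogonal to \<open>Q\<close>, all four polar exponents have the
  same \<open>Q\<close>-degree. Finally the Newton polyhedron is the convex hull of the two quadrants at
  \<open>(\<alpha>, \<beta>)\<close> and \<open>(\<gamma>, \<delta>)\<close>, which have the same \<open>P\<close>-weight, so \<open>\<Delta>(P)\<close> is the segment between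
  them and contains the whole support of \<open>g\<close>.\<close>

definition mmonomial :: "mexp \<Rightarrow> complex \<times> complex \<Rightarrow> complex" where
  "mmonomial e z = fst z ^ fst (fst e) * snd z ^ snd (fst e)
     * cnj (fst z) ^ fst (snd e) * cnj (snd z) ^ snd (snd e)"

lemma meval_eq_sum_superset:
  assumes "finite S" "msupp f \<subseteq> S"
  shows "meval f z = (\<Sum>e\<in>S. f e * mmonomial e z)"
proof -
  have "(\<Sum>e\<in>msupp f. f e * mmonomial e z) = (\<Sum>e\<in>S. f e * mmonomial e z)"
    by (rule sum.mono_neutral_left) (use assms in \<open>auto simp: msupp_def\<close>)
  then show ?thesis
    by (simp add: meval_def mmonomial_def mult.assoc)
qed

lemma msupp_mmono_subset: "msupp (mmono e c) \<subseteq> {e}"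
  by (auto simp: msupp_def mmono_def)

lemma msupp_madd_subset: "msupp (madd f h) \<subseteq> msupp f \<union> msupp h"
  by (auto simp: msupp_def madd_def)

lemma finite_msupp_mmono: "finite (msupp (mmono e c))"
  using msupp_mmono_subset finite_subset by blast

lemma finite_msupp_madd: "finite (msupp f) \<Longrightarrow> finite (msupp h) \<Longrightarrow> finite (msupp (madd f h))"
  by (meson finite_UnI finite_subset msupp_madd_subset)

lemma meval_mmono: "meval (mmono e c) z = c * mmonomial e z"
  by (subst meval_eq_sum_superset[OF _ msupp_mmono_subset]) (auto simp: mmono_def)

lemma meval_madd:
  assumes "finite (msupp f)" "finite (msupp h)"
  shows "meval (madd f h) z = meval f z + meval h z"
proof -
  let ?S = "msupp f \<union> msupp h"
  have "meval (madd f h) z = (\<Sum>e\<in>?S. madd f h e * mmonomial e z)"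
    using assms msupp_madd_subset by (intro meval_eq_sum_superset) auto
  also have "\<dots> = (\<Sum>e\<in>?S. f e * mmonomial e z) + (\<Sum>e\<in>?S. h e * mmonomial e z)"
    by (simp add: madd_def distrib_right sum.distrib)
  also have "\<dots> = meval f z + meval h z"
    using assms by (simp add: meval_eq_sum_superset[of ?S])
  finally show ?thesis .
qed

lemma face_function_eq_self: "rexp ` msupp f \<subseteq> \<Delta> \<Longrightarrow> face_function f \<Delta> = f"
  by (auto simp: face_function_def msupp_def fun_eq_iff image_subset_iff)

lemma newton_nondeg_over_if_no_zeros:
  "\<forall>z\<in>torus2. meval (face_function f \<Delta>) z \<noteq> 0 \<Longrightarrow> newton_nondeg_over f \<Delta>"
  by (auto simp: newton_nondeg_over_def)

lemma not_strongly_newton_nondeg_over_if_no_zeros: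
  "\<forall>z\<in>torus2. meval (face_function f \<Delta>) z \<noteq> 0
    \<Longrightarrow> \<not> strongly_newton_nondeg_over f \<Delta>"
  unfolding strongly_newton_nondeg_over_def by (metis UNIV_I imageE)

lemma cnj_eq_inverse_if_norm_eq_1:
  fixes w :: complex
  assumes "norm w = 1"
  shows "cnj w = inverse w"
proof (rule inverse_unique[symmetric])
  show "w * cnj w = 1"
    using assms by (simp add: complex_norm_square[symmetric])
qed

lemma power_mult_cnj_power_polar:
  fixes z :: complex
  assumes "z \<noteq> 0"
  shows "z ^ n * cnj z ^ m = of_real (norm z ^ (n + m)) * sgn z powi (int n - int m)"
proof -
  have z: "z = of_real (norm z) * sgn z"
    using assms by (simp add: sgn_eq)
  have "norm (sgn z) = 1"
    using assms by (simp add: norm_sgn)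
  then have "cnj (sgn z) = inverse (sgn z)" and "sgn z \<noteq> 0"
    by (auto simp: cnj_eq_inverse_if_norm_eq_1)
  then have "z ^ n * cnj z ^ m = of_real (norm z ^ (n + m)) * (sgn z ^ n * inverse (sgn z) ^ m)"
    by (subst (1 2) z) (simp add: power_mult_distrib power_add)
  also have "sgn z ^ n * inverse (sgn z) ^ m = sgn z powi (int n - int m)"
    using \<open>sgn z \<noteq> 0\<close> by (simp add: power_int_diff field_simps)
  finally show ?thesis .
qed

definition laurent_monomial :: "complex \<times> complex \<Rightarrow> int \<times> int \<Rightarrow> complex" where
  "laurent_monomial w k = fst w powi fst k * snd w powi snd k"

definition polar_exp :: "mexp \<Rightarrow> int \<times> int" where
  "polar_exp e = (int (fst (fst e)) - int (fst (snd e)), int (snd (fst e)) - int (snd (snd e)))"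

lemma mmonomial_polar_form:
  assumes "z \<in> torus2"
  shows "mmonomial e z =
    of_real (norm (fst z) ^ (fst (fst e) + fst (snd e)) * norm (snd z) ^ (snd (fst e) + snd (snd e)))
    * laurent_monomial (map_prod sgn sgn z) (polar_exp e)"
proof -
  have "mmonomial e z = (fst z ^ fst (fst e) * cnj (fst z) ^ fst (snd e))
      * (snd z ^ snd (fst e) * cnj (snd z) ^ snd (snd e))"
    by (simp add: mmonomial_def algebra_simps)
  also have "\<dots> = of_real (norm (fst z) ^ (fst (fst e) + fst (snd e)))
      * sgn (fst z) powi (int (fst (fst e)) - int (fst (snd e)))
      * (of_real (norm (snd z) ^ (snd (fst e) + snd (snd e)))
      * sgn (snd z) powi (int (snd (fst e)) - int (snd (snd e))))"
    using assms by (simp add: torus2_def power_mult_cnj_power_polar)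
  finally show ?thesis
    by (simp add: laurent_monomial_def polar_exp_def map_prod_def split_beta)
qed

lemma laurent_monomial_add:
  "fst w \<noteq> 0 \<Longrightarrow> snd w \<noteq> 0
    \<Longrightarrow> laurent_monomial w (k + l) = laurent_monomial w k * laurent_monomial w l"
  by (simp add: laurent_monomial_def power_int_add)

lemma laurent_monomial_unimodular:
  assumes "norm (fst w) = 1" "norm (snd w) = 1"
  shows "norm (laurent_monomial w k) = 1"
    and "cnj (laurent_monomial w k) = laurent_monomial w (- k)"
  using assms
  by (simp_all add: laurent_monomial_def norm_mult norm_power_int cnj_eq_inverse_if_norm_eq_1
      power_int_minus power_int_inverse)

lemma unimodular_combination_nonzero_1:
  fixes X :: complex and R1 R2 :: real
  assumes "norm X = 1" "R1 \<noteq> 0" "R2 \<noteq> 0"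
  shows "of_real R1 * (X * X - 1) + of_real R2 * (X + cnj X) \<noteq> 0"
proof
  assume h: "of_real R1 * (X * X - 1) + of_real R2 * (X + cnj X) = 0"
  obtain x y where X: "X = Complex x y" by (cases X)
  have n: "x * x + y * y = 1"
    using assms(1) unfolding X norm_complex_def by (simp add: power2_eq_square)
  have re: "R1 * (x * x - y * y - 1) + R2 * (2 * x) = 0" and im: "R1 * (2 * x * y) = 0"
    using arg_cong[OF h, of Re] arg_cong[OF h, of Im] by (auto simp: X algebra_simps)
  from im assms have "x = 0 \<or> y = 0" by auto
  then show False
    using re n assms by (auto simp: power2_eq_square[symmetric])
qed

lemma unimodular_combination_nonzero_2:
  fixes X :: complex and R1 R2 :: real
  assumes "norm X = 1" "R1 \<noteq> 0" "R2 \<noteq> 0"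
  shows "of_real R1 * (X - cnj X) + of_real R2 * (X * X + 1) \<noteq> 0"
proof
  assume h: "of_real R1 * (X - cnj X) + of_real R2 * (X * X + 1) = 0"
  obtain x y where X: "X = Complex x y" by (cases X)
  have n: "x * x + y * y = 1"
    using assms(1) unfolding X norm_complex_def by (simp add: power2_eq_square)
  have re: "R2 * (x * x - y * y + 1) = 0" and im: "R1 * (2 * y) + R2 * (2 * x * y) = 0"
    using arg_cong[OF h, of Re] arg_cong[OF h, of Im] by (auto simp: X algebra_simps)
  from re assms have "x * x - y * y + 1 = 0" by simp
  with n have "x * x = 0" by linarith
  with n im assms show False by auto
qed

lemma four_laurent_terms_nonzero:
  fixes w :: "complex \<times> complex" and R1 R2 :: real and B \<kappa> C D :: "int \<times> int"
  assumes w: "norm (fst w) = 1" "norm (snd w) = 1" and R: "R1 \<noteq> 0" "R2 \<noteq> 0"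
    and CD: "(C, D) = (B + \<kappa>, B - \<kappa>) \<or> (C, D) = (B + \<kappa> + \<kappa> + \<kappa>, B + \<kappa>)"
  shows "of_real R1 * laurent_monomial w (B + \<kappa> + \<kappa>) - of_real R1 * laurent_monomial w B
    + of_real R2 * laurent_monomial w C + of_real R2 * laurent_monomial w D \<noteq> 0"
proof -
  have w0: "fst w \<noteq> 0" "snd w \<noteq> 0"
    using w by auto
  define U where "U = laurent_monomial w B"
  define X where "X = laurent_monomial w \<kappa>"
  have nX: "norm X = 1" and "norm U = 1"
    using laurent_monomial_unimodular(1)[OF w] by (auto simp: X_def U_def)
  then have "X \<noteq> 0" "U \<noteq> 0"
    by auto
  have add: "laurent_monomial w (k + l) = laurent_monomial w k * laurent_monomial w l" for k l
    using laurent_monomial_add[OF w0] .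
  have minus: "laurent_monomial w (B - \<kappa>) = U * cnj X"
    using add[of B "- \<kappa>"] laurent_monomial_unimodular(2)[OF w] by (simp add: U_def X_def)
  have XcX: "X * cnj X = 1"
    using nX by (simp add: cnj_eq_inverse_if_norm_eq_1 \<open>X \<noteq> 0\<close>)
  from CD show ?thesis
  proof
    assume "(C, D) = (B + \<kappa>, B - \<kappa>)"
    then have C: "C = B + \<kappa>" and D: "D = B - \<kappa>" by simp_all
    have "of_real R1 * laurent_monomial w (B + \<kappa> + \<kappa>) - of_real R1 * laurent_monomial w B
        + of_real R2 * laurent_monomial w C + of_real R2 * laurent_monomial w D
        = U * (of_real R1 * (X * X - 1) + of_real R2 * (X + cnj X))"
      unfolding C D by (simp add: add minus U_def[symmetric] X_def[symmetric] algebra_simps)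
    then show ?thesis
      using \<open>U \<noteq> 0\<close> unimodular_combination_nonzero_1[OF nX R] by simp
  next
    assume "(C, D) = (B + \<kappa> + \<kappa> + \<kappa>, B + \<kappa>)"
    then have C: "C = B + \<kappa> + \<kappa> + \<kappa>" and D: "D = B + \<kappa>" by simp_all
    have "of_real R1 * laurent_monomial w (B + \<kappa> + \<kappa>) - of_real R1 * laurent_monomial w B
        + of_real R2 * laurent_monomial w C + of_real R2 * laurent_monomial w D
        = U * X * (of_real R1 * (X - cnj X) + of_real R2 * (X * X + 1))"
      unfolding C D by (simp add: add U_def[symmetric] X_def[symmetric] algebra_simps XcX)
    then show ?thesis
      using \<open>U \<noteq> 0\<close> \<open>X \<noteq> 0\<close> unimodular_combination_nonzero_2[OF nX R] by simp
  qed
qed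

definition quadrant :: "real \<times> real \<Rightarrow> (real \<times> real) set" where
  "quadrant p = {x. fst p \<le> fst x \<and> snd p \<le> snd x}"

lemma convex_quadrant: "convex (quadrant p)"
proof -
  have "quadrant p = {x. inner (1, 0) x \<ge> fst p} \<inter> {x. inner (0, 1) x \<ge> snd p}"
    by (auto simp: quadrant_def inner_prod_def)
  then show ?thesis
    by (simp add: convex_Int convex_halfspace_ge)
qed

lemma newton_polyhedron_eq_hull_quadrants:
  "newton_polyhedron f = convex hull (\<Union>e\<in>msupp f. quadrant (rexp e))"
proof -
  have "{p + v | v. 0 \<le> fst v \<and> 0 \<le> snd v} = quadrant p" for p :: "real \<times> real"
  proof (intro set_eqI iffI)
    fix x
    assume "x \<in> quadrant p"
    then have "x = p + (x - p)" "0 \<le> fst (x - p) \<and> 0 \<le> snd (x - p)"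
      by (auto simp: quadrant_def)
    then show "x \<in> {p + v | v. 0 \<le> fst v \<and> 0 \<le> snd v}"
      by blast
  qed (auto simp: quadrant_def)
  then show ?thesis
    by (simp add: newton_polyhedron_def)
qed

lemma wfun_convex_combination: "wfun P (u *\<^sub>R s + v *\<^sub>R t) = u * wfun P s + v * wfun P t"
  by (simp add: wfun_def algebra_simps)

lemma wfun_quadrant:
  assumes "0 < fst P" "0 < snd P" "s \<in> quadrant p"
  shows "wfun P p \<le> wfun P s" and "wfun P s = wfun P p \<Longrightarrow> s = p"
proof -
  have le: "real (fst P) * fst p \<le> real (fst P) * fst s" "real (snd P) * snd p \<le> real (snd P) * snd s"
    using assms by (auto simp: quadrant_def)
  then show "wfun P p \<le> wfun P s"
    by (simp add: wfun_def)
  assume "wfun P s = wfun P p"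
  then have "real (fst P) * fst s = real (fst P) * fst p" "real (snd P) * snd s = real (snd P) * snd p"
    using le unfolding wfun_def by linarith+
  then show "s = p"
    using assms by (simp add: prod_eq_iff)
qed

lemma wfun_hull_two_quadrants:
  assumes P: "0 < fst P" "0 < snd P" and pq: "wfun P p = wfun P q"
    and x: "x \<in> convex hull (quadrant p \<union> quadrant q)"
  shows "wfun P p \<le> wfun P x" and "wfun P x = wfun P p \<Longrightarrow> x \<in> closed_segment p q"
proof -
  have "quadrant p \<noteq> {}" "quadrant q \<noteq> {}"
    by (auto simp: quadrant_def)
  then obtain u v s t where xuv: "x = u *\<^sub>R s + v *\<^sub>R t" and uv: "u \<ge> 0" "v \<ge> 0" "u + v = 1"
    and s: "s \<in> quadrant p" and t: "t \<in> quadrant q"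
    using x convex_hull_union_two[OF convex_quadrant _ convex_quadrant] by blast
  have ge: "u * wfun P p \<le> u * wfun P s" "v * wfun P p \<le> v * wfun P t"
    using wfun_quadrant(1)[OF P s] wfun_quadrant(1)[OF P t] pq uv by (auto intro: mult_left_mono)
  have wx: "wfun P x = u * wfun P s + v * wfun P t"
    by (simp add: xuv wfun_convex_combination)
  have wp: "u * wfun P p + v * wfun P p = wfun P p"
    using uv(3) by (simp flip: distrib_right)
  show "wfun P p \<le> wfun P x"
    using ge wx wp by linarith
  assume "wfun P x = wfun P p"
  then have "u * wfun P s = u * wfun P p" "v * wfun P t = v * wfun P p"
    using ge wx wp by linarith+
  then have us: "u *\<^sub>R s = u *\<^sub>R p" and vt: "v *\<^sub>R t = v *\<^sub>R q"
    using wfun_quadrant(2)[OF P s] wfun_quadrant(2)[OF P t] pq by auto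
  have "x = u *\<^sub>R p + v *\<^sub>R q"
    by (simp only: xuv us vt)
  moreover have "u = 1 - v"
    using uv(3) by simp
  ultimately have "x = (1 - v) *\<^sub>R p + v *\<^sub>R q"
    by simp
  then show "x \<in> closed_segment p q"
    using uv by (auto simp: closed_segment_def)
qed

lemma dP_faceP_two_quadrants:
  assumes N: "newton_polyhedron f = convex hull (quadrant p \<union> quadrant q)"
    and P: "0 < fst P" "0 < snd P" and pq: "wfun P p = wfun P q"
  shows "dP f P = wfun P p" and "faceP f P = closed_segment p q"
proof -
  have "p \<in> newton_polyhedron f" "q \<in> newton_polyhedron f"
    unfolding N by (auto intro: hull_inc simp: quadrant_def)
  then show dP: "dP f P = wfun P p"
    unfolding dP_def by (intro cInf_eq_minimum) (auto simp: N wfun_hull_two_quadrants(1)[OF P pq])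
  have "closed_segment p q \<subseteq> newton_polyhedron f"
    using \<open>p \<in> newton_polyhedron f\<close> \<open>q \<in> newton_polyhedron f\<close>
    by (simp add: N closed_segment_subset convex_convex_hull)
  moreover have "wfun P x = wfun P p" if x: "x \<in> closed_segment p q" for x
  proof -
    obtain u where "x = (1 - u) *\<^sub>R p + u *\<^sub>R q"
      using x unfolding closed_segment_def by blast
    then have "wfun P x = (1 - u) * wfun P p + u * wfun P q"
      by (simp only: wfun_convex_combination)
    then show ?thesis
      using pq by (simp add: algebra_simps)
  qed
  ultimately show "faceP f P = closed_segment p q"
    using wfun_hull_two_quadrants(2)[OF P pq] unfolding faceP_def dP N by blast
qed

locale four_term_mpoly =
  fixes \<alpha> \<beta> \<gamma> \<delta> a a' b b' c c' d d' :: nat and g :: mpoly2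
  assumes exponent_bounds: "a \<le> \<alpha>" "a' \<le> \<alpha>" "b \<le> \<beta>" "b' \<le> \<beta>"
      "c \<le> \<gamma>" "c' \<le> \<gamma>" "d \<le> \<delta>" "d' \<le> \<delta>"
    and g_def: "g = madd (madd (madd (mmono ((a, b), (\<alpha> - a, \<beta> - b)) 1)
                  (mmono ((a', b'), (\<alpha> - a', \<beta> - b')) (-1)))
                  (mmono ((c, d), (\<gamma> - c, \<delta> - d)) 1))
                  (mmono ((c', d'), (\<gamma> - c', \<delta> - d')) 1)"
begin

definition eA :: mexp where "eA = ((a, b), (\<alpha> - a, \<beta> - b))"
definition eA' :: mexp where "eA' = ((a', b'), (\<alpha> - a', \<beta> - b'))"
definition eC :: mexp where "eC = ((c, d), (\<gamma> - c, \<delta> - d))"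
definition eC' :: mexp where "eC' = ((c', d'), (\<gamma> - c', \<delta> - d'))"

definition \<kappa> :: "int \<times> int" where "\<kappa> = (int a - int a', int b - int b')"

lemma g_apply:
  "g e = (if e = eA then 1 else 0) - (if e = eA' then 1 else 0)
       + (if e = eC then 1 else 0) + (if e = eC' then 1 else 0)"
  by (simp add: g_def madd_def mmono_def eA_def eA'_def eC_def eC'_def)

lemma msupp_g_subset: "msupp g \<subseteq> {eA, eA', eC, eC'}"
  by (auto simp: msupp_def g_apply split: if_splits)

lemma meval_g: "meval g z = mmonomial eA z - mmonomial eA' z + mmonomial eC z + mmonomial eC' z"
  by (simp add: g_def meval_madd finite_msupp_madd finite_msupp_mmono meval_mmono
      eA_def eA'_def eC_def eC'_def)

lemma rexp_exponents:
  "rexp eA = (real \<alpha>, real \<beta>)" "rexp eA' = (real \<alpha>, real \<beta>)"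
  "rexp eC = (real \<gamma>, real \<delta>)" "rexp eC' = (real \<gamma>, real \<delta>)"
  using exponent_bounds by (simp_all add: rexp_def eA_def eA'_def eC_def eC'_def)

lemma eA_eq_eA'_iff: "eA = eA' \<longleftrightarrow> \<kappa> = 0"
  using exponent_bounds by (auto simp: eA_def eA'_def \<kappa>_def zero_prod_def)

lemma rexp_msupp_g:
  assumes "\<alpha> < \<gamma>" "eA \<noteq> eA'"
  shows "rexp ` msupp g = {(real \<alpha>, real \<beta>), (real \<gamma>, real \<delta>)}"
proof -
  have "eA \<noteq> eC" "eA \<noteq> eC'" "eA' \<noteq> eC"
    using rexp_exponents assms(1) by (metis fst_conv less_irrefl of_nat_eq_iff)+
  then have "g eA \<noteq> 0" "g eC \<noteq> 0"
    using assms(2) by (auto simp: g_apply)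
  then have "eA \<in> msupp g" "eC \<in> msupp g"
    by (simp_all add: msupp_def)
  then show ?thesis
    using msupp_g_subset rexp_exponents by (auto simp: image_subset_iff) (metis image_eqI)+
qed

lemma newton_polyhedron_g:
  assumes "\<alpha> < \<gamma>" "eA \<noteq> eA'"
  shows "newton_polyhedron g
    = convex hull (quadrant (real \<alpha>, real \<beta>) \<union> quadrant (real \<gamma>, real \<delta>))"
proof -
  have "(\<Union>p\<in>rexp ` msupp g. quadrant p)
      = quadrant (real \<alpha>, real \<beta>) \<union> quadrant (real \<gamma>, real \<delta>)"
    by (simp add: rexp_msupp_g[OF assms])
  then show ?thesis
    by (simp add: newton_polyhedron_eq_hull_quadrants)
qed

lemma faceP_g:
  assumes "\<alpha> < \<gamma>" "eA \<noteq> eA'" "0 < p1" "0 < p2" "p1 * \<alpha> + p2 * \<beta> = p1 * \<gamma> + p2 * \<delta>"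
  shows "faceP g (p1, p2) = closed_segment (real \<alpha>, real \<beta>) (real \<gamma>, real \<delta>)"
proof -
  have "wfun (p1, p2) (real \<alpha>, real \<beta>) = wfun (p1, p2) (real \<gamma>, real \<delta>)"
    using assms(5) unfolding wfun_def by (simp flip: of_nat_mult of_nat_add)
  then show ?thesis
    using assms(3,4) newton_polyhedron_g[OF assms(1,2)] by (intro dP_faceP_two_quadrants(2)) simp_all
qed

lemma radially_wh_g:
  assumes "p1 * \<alpha> + p2 * \<beta> = p1 * \<gamma> + p2 * \<delta>" "0 < p1 * \<alpha> + p2 * \<beta>"
    and "(p1, p2) \<noteq> (0, 0)"
  shows "radially_wh g (p1, p2) (p1 * \<alpha> + p2 * \<beta>)"
  unfolding radially_wh_def
proof (intro conjI allI impI)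
  fix e
  assume "g e \<noteq> 0"
  then have "e \<in> {eA, eA', eC, eC'}"
    using msupp_g_subset by (auto simp: msupp_def)
  then show "fst (p1, p2) * (fst (fst e) + fst (snd e)) + snd (p1, p2) * (snd (fst e) + snd (snd e))
      = p1 * \<alpha> + p2 * \<beta>"
    using assms(1) exponent_bounds by (auto simp: eA_def eA'_def eC_def eC'_def)
qed (use assms in auto)

lemma polar_exp_eA: "polar_exp eA = polar_exp eA' + \<kappa> + \<kappa>"
  using exponent_bounds by (simp add: polar_exp_def eA_def eA'_def \<kappa>_def of_nat_diff)

lemma polar_exp_eC_eC':
  assumes "(int a - int a', int b - int b') = (int c - int c', int d - int d')"
    and "(2 * (int a - int c) - int \<alpha> + int \<gamma>, 2 * (int b - int d) - int \<beta> + int \<delta>)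
          = (int a - int a', int b - int b')
      \<or> (2 * (int a - int c) - int \<alpha> + int \<gamma>, 2 * (int b - int d) - int \<beta> + int \<delta>)
          = (- (int a - int a'), - (int b - int b'))"
  shows "(polar_exp eC, polar_exp eC') = (polar_exp eA' + \<kappa>, polar_exp eA' - \<kappa>)
    \<or> (polar_exp eC, polar_exp eC') = (polar_exp eA' + \<kappa> + \<kappa> + \<kappa>, polar_exp eA' + \<kappa>)"
  using assms exponent_bounds
  by (auto simp: polar_exp_def eA'_def eC_def eC'_def \<kappa>_def of_nat_diff)

lemma polar_wh_g:
  assumes Q: "(q1, q2) \<noteq> (0, 0)" and orth: "q1 * fst \<kappa> + q2 * snd \<kappa> = 0"
    and progression: "(polar_exp eC, polar_exp eC') = (polar_exp eA' + \<kappa>, polar_exp eA' - \<kappa>)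
      \<or> (polar_exp eC, polar_exp eC') = (polar_exp eA' + \<kappa> + \<kappa> + \<kappa>, polar_exp eA' + \<kappa>)"
  shows "polar_wh g (q1, q2) (q1 * (2 * int a - int \<alpha>) + q2 * (2 * int b - int \<beta>))"
proof -
  define deg where "deg v = q1 * fst v + q2 * snd v" for v :: "int \<times> int"
  have deg_add: "deg (v + \<kappa>) = deg v" and deg_diff: "deg (v - \<kappa>) = deg v" for v
    using orth by (simp_all add: deg_def algebra_simps)
  have deg_eA: "deg (polar_exp eA) = q1 * (2 * int a - int \<alpha>) + q2 * (2 * int b - int \<beta>)"
    using exponent_bounds by (simp add: deg_def polar_exp_def eA_def of_nat_diff)
  have deg_eq: "deg (polar_exp e) = q1 * (2 * int a - int \<alpha>) + q2 * (2 * int b - int \<beta>)"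
    if "e \<in> {eA, eA', eC, eC'}" for e
    using that progression deg_eA by (auto simp: polar_exp_eA deg_add deg_diff)
  show ?thesis
    unfolding polar_wh_def
  proof (intro conjI allI impI)
    fix e
    assume "g e \<noteq> 0"
    then have "e \<in> {eA, eA', eC, eC'}"
      using msupp_g_subset by (auto simp: msupp_def)
    then have "deg (polar_exp e) = q1 * (2 * int a - int \<alpha>) + q2 * (2 * int b - int \<beta>)"
      by (rule deg_eq)
    then show "fst (q1, q2) * (int (fst (fst e)) - int (fst (snd e)))
        + snd (q1, q2) * (int (snd (fst e)) - int (snd (snd e)))
        = q1 * (2 * int a - int \<alpha>) + q2 * (2 * int b - int \<beta>)"
      by (simp add: deg_def polar_exp_def)
  qed (rule Q)
qed

lemma meval_g_neq_0:
  assumes progression: "(polar_exp eC, polar_exp eC') = (polar_exp eA' + \<kappa>, polar_exp eA' - \<kappa>)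
      \<or> (polar_exp eC, polar_exp eC') = (polar_exp eA' + \<kappa> + \<kappa> + \<kappa>, polar_exp eA' + \<kappa>)"
    and z: "z \<in> torus2"
  shows "meval g z \<noteq> 0"
proof -
  define w where "w = map_prod sgn sgn z"
  define R1 where "R1 = norm (fst z) ^ \<alpha> * norm (snd z) ^ \<beta>"
  define R2 where "R2 = norm (fst z) ^ \<gamma> * norm (snd z) ^ \<delta>"
  have w: "norm (fst w) = 1" "norm (snd w) = 1"
    using z by (auto simp: w_def torus2_def norm_sgn)
  have R: "R1 \<noteq> 0" "R2 \<noteq> 0"
    using z by (auto simp: torus2_def R1_def R2_def)
  have "mmonomial eA z = of_real R1 * laurent_monomial w (polar_exp eA)"
    "mmonomial eA' z = of_real R1 * laurent_monomial w (polar_exp eA')"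
    "mmonomial eC z = of_real R2 * laurent_monomial w (polar_exp eC)"
    "mmonomial eC' z = of_real R2 * laurent_monomial w (polar_exp eC')"
    using exponent_bounds
    by (simp_all add: mmonomial_polar_form[OF z] w_def R1_def R2_def eA_def eA'_def eC_def eC'_def)
  then show ?thesis
    using four_laurent_terms_nonzero[OF w R progression] by (simp add: meval_g polar_exp_eA)
qed

end

theorem mainTheorem1:
  fixes \<alpha> \<beta> \<gamma> \<delta> a a' b b' c c' d d' p1 p2 :: nat
    and q1 q2 :: int
    and g :: mpoly2
  assumes "\<alpha> < \<gamma>" and "\<delta> < \<beta>"
    and "a \<le> \<alpha>" "a' \<le> \<alpha>" "b \<le> \<beta>" "b' \<le> \<beta>"
    and "c \<le> \<gamma>" "c' \<le> \<gamma>" "d \<le> \<delta>" "d' \<le> \<delta>"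
    and g_def: "g = madd (madd (madd (mmono ((a, b), (\<alpha> - a, \<beta> - b)) 1)
                  (mmono ((a', b'), (\<alpha> - a', \<beta> - b')) (-1)))
                  (mmono ((c, d), (\<gamma> - c, \<delta> - d)) 1))
                  (mmono ((c', d'), (\<gamma> - c', \<delta> - d')) 1)"
    and "p1 > 0" "p2 > 0"
    and "q1 \<ge> 0" "q2 \<ge> 0" "(q1, q2) \<noteq> (0, 0)"
    and h1: "int p1 * (int \<gamma> - int \<alpha>) + int p2 * (int \<delta> - int \<beta>) = 0"
    and h2: "\<exists>k::int. k \<noteq> 0 \<and> int a - int a' = q2 * k \<and> int b - int b' = - q1 * k"
    and h3: "(int a - int a', int b - int b') = (int c - int c', int d - int d')"
    and h4: "(2 * (int a - int c) - int \<alpha> + int \<gamma>, 2 * (int b - int d) - int \<beta> + int \<delta>)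
               = (int a - int a', int b - int b')
           \<or> (2 * (int a - int c) - int \<alpha> + int \<gamma>, 2 * (int b - int d) - int \<beta> + int \<delta>)
               = (- (int a - int a'), - (int b - int b'))"
    and h5: "q1 * (2 * int a - int \<alpha>) + q2 * (2 * int b - int \<beta>) \<noteq> 0"
  shows "mixed_wh g
    \<and> p1 * \<alpha> + p2 * \<beta> = p1 * \<gamma> + p2 * \<delta>
    \<and> radially_wh g (p1, p2) (p1 * \<alpha> + p2 * \<beta>)
    \<and> polar_wh g (q1, q2) (q1 * (2 * int a - int \<alpha>) + q2 * (2 * int b - int \<beta>))
    \<and> q1 * (2 * int a - int \<alpha>) + q2 * (2 * int b - int \<beta>) \<noteq> 0
    \<and> aff_dim (faceP g (p1, p2)) = 1
    \<and> g = face_function g (faceP g (p1, p2))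
    \<and> (\<forall>z\<in>torus2. meval g z \<noteq> 0)
    \<and> newton_nondeg_over g (faceP g (p1, p2))
    \<and> \<not> strongly_newton_nondeg_over g (faceP g (p1, p2))"
proof -
  interpret four_term_mpoly \<alpha> \<beta> \<gamma> \<delta> a a' b b' c c' d d' g
    using assms by unfold_locales
  obtain k where "k \<noteq> 0" "int a - int a' = q2 * k" "int b - int b' = - q1 * k"
    using h2 by blast
  then have "eA \<noteq> eA'" and orth: "q1 * fst \<kappa> + q2 * snd \<kappa> = 0"
    using \<open>(q1, q2) \<noteq> (0, 0)\<close> by (auto simp: eA_eq_eA'_iff \<kappa>_def zero_prod_def)
  have "int (p1 * \<alpha> + p2 * \<beta>) = int (p1 * \<gamma> + p2 * \<delta>)"
    using h1 by (simp add: algebra_simps)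
  then have dr: "p1 * \<alpha> + p2 * \<beta> = p1 * \<gamma> + p2 * \<delta>"
    by (simp only: of_nat_eq_iff)
  note face = faceP_g[OF \<open>\<alpha> < \<gamma>\<close> \<open>eA \<noteq> eA'\<close> \<open>p1 > 0\<close> \<open>p2 > 0\<close> dr]
  have aff_dim: "aff_dim (faceP g (p1, p2)) = 1"
    using \<open>\<alpha> < \<gamma>\<close> by (simp add: face segment_convex_hull aff_dim_convex_hull)
  have ffg: "face_function g (faceP g (p1, p2)) = g"
    using rexp_msupp_g[OF \<open>\<alpha> < \<gamma>\<close> \<open>eA \<noteq> eA'\<close>] by (intro face_function_eq_self) (simp add: face)
  note progression = polar_exp_eC_eC'[OF h3 h4]
  have no_zeros: "\<forall>z\<in>torus2. meval g z \<noteq> 0"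
    using meval_g_neq_0[OF progression] by blast
  have "0 < p1 * \<alpha> + p2 * \<beta>"
    using \<open>\<delta> < \<beta>\<close> \<open>p2 > 0\<close> by simp
  then have radial: "radially_wh g (p1, p2) (p1 * \<alpha> + p2 * \<beta>)"
    using \<open>p2 > 0\<close> by (intro radially_wh_g[OF dr]) simp_all
  have polar: "polar_wh g (q1, q2) (q1 * (2 * int a - int \<alpha>) + q2 * (2 * int b - int \<beta>))"
    using \<open>(q1, q2) \<noteq> (0, 0)\<close> orth progression by (rule polar_wh_g)
  have mixed: "mixed_wh g"
    using radial polar unfolding mixed_wh_def by blast
  have nondeg: "newton_nondeg_over g (faceP g (p1, p2))"
    using newton_nondeg_over_if_no_zeros[of g] no_zeros by (simp add: ffg)
  have not_strongly: "\<not> strongly_newton_nondeg_over g (faceP g (p1, p2))"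
    using not_strongly_newton_nondeg_over_if_no_zeros[of g] no_zeros by (simp add: ffg)
  show ?thesis
    by (intro conjI mixed dr radial polar h5 aff_dim ffg[symmetric] no_zeros nondeg not_strongly)
qed

end
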